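(* Let $\zeta\in(0,\infty)$ and $(h,w)\in\boldsymbol\Sigma([0,\zeta])$. Then the snake metric $d_{h,w}$ is a continuous pseudo-metric on $[0,\zeta]$ satisfying the four points inequality: for all $s_1,s_2,s_3,s_4\in[0,\zeta]$, $$d_{h,w}(s_1,s_2)+d_{h,w}(s_3,s_4)\le\max\big(d_{h,w}(s_1,s_3)+d_{h,w}(s_2,s_4),\,d_{h,w}(s_1,s_4)+d_{h,w}(s_2,s_3)\big).$$
   Context: $\mathbf C_0$: continuous functions $[0,\infty)\to\mathbb R$ with the topology of uniform convergence on compacts. A snake $(h,w)\in\boldsymbol\Sigma([0,\zeta])$: $h:[0,\zeta]\to[0,\infty)$ continuous, $h(0)=h(\zeta)=0$, $s\mapsto w_s\in\mathbf C_0$ continuous, $w_s(r)=w_s(h(s))=:\widehat w_s$ for $r\ge h(s)$, and $w_{s_1}(r)=w_{s_2}(r)$ for $r\in[0,m_h(s_1,s_2)]$ where $m_h(s_1,s_2)=\min_{[s_1\wedge s_2,s_1\vee s_2]}h$. Snake metric: $M_{h,w}(s_1,s_2)=\min\big(\min_{r\in[m_h(s_1,s_2),h(s_1)]}w_{s_1}(r),\min_{r\in[m_h(s_1,s_2),h(s_2)]}w_{s_2}(r)\big)$, $d_{h,w}(s_1,s_2)=\widehat w_{s_1}+\widehat w_{s_2}-2M_{h,w}(s_1,s_2)$. *)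

theory Defs
  imports "HOL-Analysis.Analysis"
begin

text \<open>A path-valued function \<open>w :: real \<Rightarrow> real \<Rightarrow> real\<close> encodes \<open>s \<mapsto> w_s\<close>;
  only the values \<open>w s r\<close> for \<open>r \<ge> 0\<close> are relevant (elements of C_0 are functions on [0,oo)).\<close>

definition m_h :: "(real \<Rightarrow> real) \<Rightarrow> real \<Rightarrow> real \<Rightarrow> real" where
  "m_h h s1 s2 = Inf (h ` {min s1 s2 .. max s1 s2})"

definition is_snake :: "real \<Rightarrow> (real \<Rightarrow> real) \<Rightarrow> (real \<Rightarrow> real \<Rightarrow> real) \<Rightarrow> bool" where
  "is_snake \<zeta> h w \<longleftrightarrow>
     continuous_on {0..\<zeta>} h \<and> (\<forall>s\<in>{0..\<zeta>}. h s \<ge> 0) \<and> h 0 = 0 \<and> h \<zeta> = 0 \<and>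
     (\<forall>s\<in>{0..\<zeta>}. continuous_on {0..} (w s)) \<and>
     (\<forall>s\<in>{0..\<zeta>}. \<forall>R\<ge>0. \<forall>\<epsilon>>0. \<exists>\<delta>>0. \<forall>s'\<in>{0..\<zeta>}. \<bar>s' - s\<bar> < \<delta> \<longrightarrow>
          (\<forall>r\<in>{0..R}. \<bar>w s' r - w s r\<bar> < \<epsilon>)) \<and>
     (\<forall>s\<in>{0..\<zeta>}. \<forall>r. r \<ge> h s \<longrightarrow> w s r = w s (h s)) \<and>
     (\<forall>s1\<in>{0..\<zeta>}. \<forall>s2\<in>{0..\<zeta>}. \<forall>r\<in>{0..m_h h s1 s2}. w s1 r = w s2 r)"

definition tip :: "(real \<Rightarrow> real) \<Rightarrow> (real \<Rightarrow> real \<Rightarrow> real) \<Rightarrow> real \<Rightarrow> real" where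
  "tip h w s = w s (h s)"

definition M_hw :: "(real \<Rightarrow> real) \<Rightarrow> (real \<Rightarrow> real \<Rightarrow> real) \<Rightarrow> real \<Rightarrow> real \<Rightarrow> real" where
  "M_hw h w s1 s2 = min (Inf (w s1 ` {m_h h s1 s2 .. h s1})) (Inf (w s2 ` {m_h h s1 s2 .. h s2}))"

definition d_hw :: "(real \<Rightarrow> real) \<Rightarrow> (real \<Rightarrow> real \<Rightarrow> real) \<Rightarrow> real \<Rightarrow> real \<Rightarrow> real" where
  "d_hw h w s1 s2 = tip h w s1 + tip h w s2 - 2 * M_hw h w s1 s2"

end

theory Submission
  imports Defs
begin

(* M_hw h w s t behaves like a Gromov product: the paths w s and w t agree up to m_h h s t, and
   m_h is ultrametric, hence so is M_hw, i.e. min (M s t) (M t u) <= M s u.  A distance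
   tip s + tip t - 2 M s t built from such an M, with M bounded by the tips, is a pseudometric
   satisfying the four point condition.  Continuity follows because m_h h s s' is close to h s
   for s' near s, while w s' is uniformly close to w s on compacts. *)

lemma four_point_of_ultrametric:
  fixes M :: "'a \<Rightarrow> 'a \<Rightarrow> real"
  assumes commute: "\<And>x y. x \<in> S \<Longrightarrow> y \<in> S \<Longrightarrow> M x y = M y x"
    and ultrametric: "\<And>x y z. x \<in> S \<Longrightarrow> y \<in> S \<Longrightarrow> z \<in> S \<Longrightarrow> min (M x y) (M y z) \<le> M x z"
    and S: "a \<in> S" "b \<in> S" "c \<in> S" "d \<in> S"
  shows "min (M a c + M b d) (M a d + M b c) \<le> M a b + M c d"
proof -
  have "min (M a c) (M b c) \<le> M a b" "min (M a d) (M b d) \<le> M a b"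
    "min (M a c) (M a d) \<le> M c d" "min (M b c) (M b d) \<le> M c d"
    using ultrametric[of a c b] ultrametric[of a d b] ultrametric[of c a d] ultrametric[of c b d]
      commute S by simp_all
  \<comment> \<open>whichever of the four cross values is largest, these bounds dominate the other pairing\<close>
  then show ?thesis by (auto simp: min_def split: if_splits)
qed

lemma continuous_on_pseudometric:
  fixes d :: "'a::metric_space \<Rightarrow> 'a \<Rightarrow> real"
  assumes commute: "\<And>s t. s \<in> S \<Longrightarrow> t \<in> S \<Longrightarrow> d s t = d t s"
    and triangle: "\<And>s t u. s \<in> S \<Longrightarrow> t \<in> S \<Longrightarrow> u \<in> S \<Longrightarrow> d s u \<le> d s t + d t u"
    and local: "\<And>s \<epsilon>. s \<in> S \<Longrightarrow> \<epsilon> > 0 \<Longrightarrow> \<exists>\<delta>>0. \<forall>s'\<in>S. dist s' s < \<delta> \<longrightarrow> d s s' < \<epsilon>"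
  shows "continuous_on (S \<times> S) (\<lambda>(s, t). d s t)"
  unfolding continuous_on_iff
proof (intro ballI allI impI)
  fix p and \<epsilon> :: real
  assume "p \<in> S \<times> S" and "\<epsilon> > 0"
  then obtain s t where p: "p = (s, t)" and st: "s \<in> S" "t \<in> S" by auto
  obtain \<delta>1 where "\<delta>1 > 0" and \<delta>1: "\<forall>s'\<in>S. dist s' s < \<delta>1 \<longrightarrow> d s s' < \<epsilon>/2"
    using local[OF st(1), of "\<epsilon>/2"] \<open>\<epsilon> > 0\<close> by auto
  obtain \<delta>2 where "\<delta>2 > 0" and \<delta>2: "\<forall>t'\<in>S. dist t' t < \<delta>2 \<longrightarrow> d t t' < \<epsilon>/2"
    using local[OF st(2), of "\<epsilon>/2"] \<open>\<epsilon> > 0\<close> by auto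
  show "\<exists>\<delta>>0. \<forall>p'\<in>S \<times> S. dist p' p < \<delta> \<longrightarrow>
      dist ((\<lambda>(s, t). d s t) p') ((\<lambda>(s, t). d s t) p) < \<epsilon>"
  proof (intro exI[of _ "min \<delta>1 \<delta>2"] conjI ballI impI)
    show "min \<delta>1 \<delta>2 > 0" using \<open>\<delta>1 > 0\<close> \<open>\<delta>2 > 0\<close> by simp
    fix p' assume "p' \<in> S \<times> S" and close: "dist p' p < min \<delta>1 \<delta>2"
    then obtain s' t' where p': "p' = (s', t')" and st': "s' \<in> S" "t' \<in> S" by auto
    have "dist s' s < \<delta>1" "dist t' t < \<delta>2"
      using close dist_fst_le[of p' p] dist_snd_le[of p' p] unfolding p p' by auto
    then have "d s s' < \<epsilon>/2" "d t t' < \<epsilon>/2" using \<delta>1 \<delta>2 st' by auto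
    moreover have "d s' t' \<le> d s' s + d s t + d t t'" "d s t \<le> d s s' + d s' t' + d t' t"
      using triangle[of s' s t'] triangle[of s t t'] triangle[of s s' t] triangle[of s' t' t] st st'
      by linarith+
    ultimately show "dist ((\<lambda>(s, t). d s t) p') ((\<lambda>(s, t). d s t) p) < \<epsilon>"
      using commute st st' unfolding p p' dist_real_def by auto
  qed
qed

lemma Inf_image_Icc_le:
  fixes f :: "real \<Rightarrow> real"
  assumes "continuous_on {a..b} f" and "r \<in> {a..b}"
  shows "Inf (f ` {a..b}) \<le> f r"
proof -
  have "bdd_below (f ` {a..b})"
    using compact_continuous_image[OF assms(1) compact_Icc]
    by (intro bounded_imp_bdd_below compact_imp_bounded)
  then show ?thesis using assms(2) by (auto intro: cInf_lower)
qed

lemma le_Inf_image_Icc: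
  fixes f :: "real \<Rightarrow> real"
  assumes "a \<le> b" and "\<And>r. r \<in> {a..b} \<Longrightarrow> c \<le> f r"
  shows "c \<le> Inf (f ` {a..b})"
  using assms by (intro cInf_greatest) auto

lemma is_snakeD:
  assumes "is_snake \<zeta> h w"
  shows "continuous_on {0..\<zeta>} h"
    and "\<And>s. s \<in> {0..\<zeta>} \<Longrightarrow> 0 \<le> h s"
    and "\<And>s. s \<in> {0..\<zeta>} \<Longrightarrow> continuous_on {0..} (w s)"
    and "\<And>s R \<epsilon>. s \<in> {0..\<zeta>} \<Longrightarrow> 0 \<le> R \<Longrightarrow> \<epsilon> > 0 \<Longrightarrow>
      \<exists>\<delta>>0. \<forall>s'\<in>{0..\<zeta>}. \<bar>s' - s\<bar> < \<delta> \<longrightarrow> (\<forall>r\<in>{0..R}. \<bar>w s' r - w s r\<bar> < \<epsilon>)"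
    and "\<And>s1 s2 r. s1 \<in> {0..\<zeta>} \<Longrightarrow> s2 \<in> {0..\<zeta>} \<Longrightarrow> r \<in> {0..m_h h s1 s2} \<Longrightarrow> w s1 r = w s2 r"
  using assms unfolding is_snake_def by blast+

lemma m_h_commute: "m_h h s t = m_h h t s"
  unfolding m_h_def by (simp add: min.commute max.commute)

lemma m_h_same: "m_h h s s = h s"
  unfolding m_h_def by simp

lemma m_h_greatest:
  assumes "\<And>x. x \<in> {min s t..max s t} \<Longrightarrow> c \<le> h x"
  shows "c \<le> m_h h s t"
  unfolding m_h_def using assms by (intro cInf_greatest) auto

lemma m_h_le:
  assumes "is_snake \<zeta> h w" "s \<in> {0..\<zeta>}" "t \<in> {0..\<zeta>}" "x \<in> {min s t..max s t}"
  shows "m_h h s t \<le> h x"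
proof -
  have "{min s t..max s t} \<subseteq> {0..\<zeta>}" using assms(2,3) by auto
  then have "bdd_below (h ` {min s t..max s t})"
    using is_snakeD(2)[OF assms(1)] by (intro bdd_belowI[where m = 0]) blast
  then show ?thesis unfolding m_h_def using assms(4) by (auto intro: cInf_lower)
qed

lemma m_h_le_h:
  assumes "is_snake \<zeta> h w" "s \<in> {0..\<zeta>}" "t \<in> {0..\<zeta>}"
  shows "m_h h s t \<le> h s" and "m_h h s t \<le> h t"
  using assms by (auto intro!: m_h_le)

lemma m_h_nonneg:
  assumes "is_snake \<zeta> h w" "s \<in> {0..\<zeta>}" "t \<in> {0..\<zeta>}"
  shows "0 \<le> m_h h s t"
  using assms by (intro m_h_greatest is_snakeD(2)[OF assms(1)]) auto

lemma m_h_ultrametric: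
  assumes "is_snake \<zeta> h w" "a \<in> {0..\<zeta>}" "b \<in> {0..\<zeta>}" "c \<in> {0..\<zeta>}"
  shows "min (m_h h a b) (m_h h b c) \<le> m_h h a c"
proof (rule m_h_greatest)
  fix x assume "x \<in> {min a c..max a c}"
  then have "x \<in> {min a b..max a b} \<or> x \<in> {min b c..max b c}" by auto
  then show "min (m_h h a b) (m_h h b c) \<le> h x"
    using m_h_le[OF assms(1,2,3)] m_h_le[OF assms(1,3,4)] by (meson min.coboundedI1 min.coboundedI2)
qed

lemma m_h_near_h:
  assumes sn: "is_snake \<zeta> h w" and s: "s \<in> {0..\<zeta>}" and "\<eta> > 0"
  obtains \<delta> where "\<delta> > 0"
    and "\<And>s'. s' \<in> {0..\<zeta>} \<Longrightarrow> \<bar>s' - s\<bar> < \<delta> \<Longrightarrow> h s - \<eta> \<le> m_h h s s' \<and> h s' \<le> h s + \<eta>"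
proof -
  obtain \<delta> where "\<delta> > 0" and \<delta>: "\<And>x. x \<in> {0..\<zeta>} \<Longrightarrow> \<bar>x - s\<bar> < \<delta> \<Longrightarrow> \<bar>h x - h s\<bar> < \<eta>"
    using is_snakeD(1)[OF sn] s \<open>\<eta> > 0\<close> unfolding continuous_on_iff dist_real_def by metis
  have "h s - \<eta> \<le> m_h h s s' \<and> h s' \<le> h s + \<eta>" if "s' \<in> {0..\<zeta>}" "\<bar>s' - s\<bar> < \<delta>" for s'
  proof
    show "h s - \<eta> \<le> m_h h s s'"
    proof (rule m_h_greatest)
      fix x assume "x \<in> {min s s'..max s s'}"
      then have "x \<in> {0..\<zeta>}" "\<bar>x - s\<bar> < \<delta>" using s that by auto
      then have "\<bar>h x - h s\<bar> < \<eta>" by (rule \<delta>)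
      then show "h s - \<eta> \<le> h x" by linarith
    qed
    show "h s' \<le> h s + \<eta>" using \<delta>[OF that] by linarith
  qed
  with \<open>\<delta> > 0\<close> show thesis using that by blast
qed

lemma snake_path_Inf_le:
  assumes "is_snake \<zeta> h w" "s \<in> {0..\<zeta>}" "0 \<le> a" "r \<in> {a..b}"
  shows "Inf (w s ` {a..b}) \<le> w s r"
  using assms(3,4)
  by (intro Inf_image_Icc_le continuous_on_subset[OF is_snakeD(3)[OF assms(1,2)]]) auto

lemma M_hw_commute: "M_hw h w s t = M_hw h w t s"
  unfolding M_hw_def by (simp add: m_h_commute min.commute)

lemma M_hw_same: "M_hw h w s s = tip h w s"
  unfolding M_hw_def tip_def m_h_same by simp

lemma M_hw_le_tip:
  assumes sn: "is_snake \<zeta> h w" and s: "s \<in> {0..\<zeta>}" and t: "t \<in> {0..\<zeta>}"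
  shows "M_hw h w s t \<le> tip h w s"
proof -
  have "Inf (w s ` {m_h h s t..h s}) \<le> w s (h s)"
    using m_h_nonneg[OF sn s t] m_h_le_h[OF sn s t] by (intro snake_path_Inf_le[OF sn s]) auto
  then show ?thesis unfolding M_hw_def tip_def by linarith
qed

lemma M_hw_ultrametric_pointwise:
  assumes sn: "is_snake \<zeta> h w" and a: "a \<in> {0..\<zeta>}" and b: "b \<in> {0..\<zeta>}" and c: "c \<in> {0..\<zeta>}"
    and r: "r \<in> {m_h h a c..h a}"
  shows "min (M_hw h w a b) (M_hw h w b c) \<le> w a r"
proof (cases "m_h h a b \<le> r")
  case True
  then have "Inf (w a ` {m_h h a b..h a}) \<le> w a r"
    using r m_h_nonneg[OF sn a b] by (intro snake_path_Inf_le[OF sn a]) auto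
  then show ?thesis unfolding M_hw_def by linarith
next
  case False
  have "w a r = w b r"
    using False r m_h_nonneg[OF sn a c] by (intro is_snakeD(5)[OF sn a b]) auto
  moreover have "r \<in> {m_h h b c..h b}"
    using False r m_h_ultrametric[OF sn a b c] m_h_le_h[OF sn a b] by auto
  then have "Inf (w b ` {m_h h b c..h b}) \<le> w b r"
    using m_h_nonneg[OF sn b c] by (intro snake_path_Inf_le[OF sn b]) auto
  ultimately show ?thesis unfolding M_hw_def by linarith
qed

lemma M_hw_ultrametric:
  assumes sn: "is_snake \<zeta> h w" and a: "a \<in> {0..\<zeta>}" and b: "b \<in> {0..\<zeta>}" and c: "c \<in> {0..\<zeta>}"
  shows "min (M_hw h w a b) (M_hw h w b c) \<le> M_hw h w a c"
proof -
  have "min (M_hw h w a b) (M_hw h w b c) \<le> Inf (w a ` {m_h h a c..h a})"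
    using m_h_le_h[OF sn a c] M_hw_ultrametric_pointwise[OF sn a b c] by (intro le_Inf_image_Icc) auto
  moreover have "min (M_hw h w c b) (M_hw h w b a) \<le> Inf (w c ` {m_h h c a..h c})"
    using m_h_le_h[OF sn c a] M_hw_ultrametric_pointwise[OF sn c b a] by (intro le_Inf_image_Icc) auto
  ultimately show ?thesis
    unfolding M_hw_def[of h w a c] by (simp add: M_hw_commute m_h_commute min.commute)
qed

lemma snake_path_near_tip:
  assumes sn: "is_snake \<zeta> h w" and s: "s \<in> {0..\<zeta>}" and "\<epsilon> > 0"
  obtains \<delta> where "\<delta> > 0"
    and "\<And>s' r. s' \<in> {0..\<zeta>} \<Longrightarrow> \<bar>s' - s\<bar> < \<delta> \<Longrightarrow> r \<in> {m_h h s s'..max (h s) (h s')} \<Longrightarrow>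
      \<bar>w s r - tip h w s\<bar> < \<epsilon> \<and> \<bar>w s' r - tip h w s\<bar> < \<epsilon>"
proof -
  obtain \<eta> where "\<eta> > 0" and \<eta>: "\<And>r. 0 \<le> r \<Longrightarrow> \<bar>r - h s\<bar> < \<eta> \<Longrightarrow> \<bar>w s r - tip h w s\<bar> < \<epsilon>/2"
    using is_snakeD(3)[OF sn s] is_snakeD(2)[OF sn s] \<open>\<epsilon> > 0\<close>
    unfolding continuous_on_iff dist_real_def tip_def by (metis atLeast_iff half_gt_zero)
  obtain \<delta>1 where "\<delta>1 > 0" and \<delta>1: "\<forall>s'\<in>{0..\<zeta>}. \<bar>s' - s\<bar> < \<delta>1 \<longrightarrow>
      (\<forall>r\<in>{0..h s + \<eta>}. \<bar>w s' r - w s r\<bar> < \<epsilon>/2)"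
    using is_snakeD(4)[OF sn s, of "h s + \<eta>" "\<epsilon>/2"] is_snakeD(2)[OF sn s] \<open>\<eta> > 0\<close> \<open>\<epsilon> > 0\<close>
    by auto
  obtain \<delta>2 where "\<delta>2 > 0" and \<delta>2: "\<And>s'. s' \<in> {0..\<zeta>} \<Longrightarrow> \<bar>s' - s\<bar> < \<delta>2 \<Longrightarrow>
      h s - \<eta>/2 \<le> m_h h s s' \<and> h s' \<le> h s + \<eta>/2"
    using m_h_near_h[OF sn s, of "\<eta>/2"] \<open>\<eta> > 0\<close> by auto
  have "\<bar>w s r - tip h w s\<bar> < \<epsilon> \<and> \<bar>w s' r - tip h w s\<bar> < \<epsilon>"
    if s': "s' \<in> {0..\<zeta>}" "\<bar>s' - s\<bar> < min \<delta>1 \<delta>2" and r: "r \<in> {m_h h s s'..max (h s) (h s')}"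
    for s' r
  proof -
    have "0 \<le> r" "\<bar>r - h s\<bar> < \<eta>"
      using r m_h_nonneg[OF sn s s'(1)] \<delta>2[OF s'(1)] s'(2) \<open>\<eta> > 0\<close> by auto
    then have "\<bar>w s r - tip h w s\<bar> < \<epsilon>/2" "\<bar>w s' r - w s r\<bar> < \<epsilon>/2"
      using \<eta> \<delta>1 s' by auto
    then show ?thesis by linarith
  qed
  moreover have "min \<delta>1 \<delta>2 > 0" using \<open>\<delta>1 > 0\<close> \<open>\<delta>2 > 0\<close> by simp
  ultimately show thesis using that by blast
qed

lemma d_hw_local:
  assumes sn: "is_snake \<zeta> h w" and s: "s \<in> {0..\<zeta>}" and "\<epsilon> > 0"
  shows "\<exists>\<delta>>0. \<forall>s'\<in>{0..\<zeta>}. dist s' s < \<delta> \<longrightarrow> d_hw h w s s' < \<epsilon>"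
proof -
  obtain \<delta> where "\<delta> > 0" and \<delta>: "\<And>s' r. s' \<in> {0..\<zeta>} \<Longrightarrow> \<bar>s' - s\<bar> < \<delta> \<Longrightarrow>
      r \<in> {m_h h s s'..max (h s) (h s')} \<Longrightarrow>
      \<bar>w s r - tip h w s\<bar> < \<epsilon>/3 \<and> \<bar>w s' r - tip h w s\<bar> < \<epsilon>/3"
    using snake_path_near_tip[OF sn s, of "\<epsilon>/3"] \<open>\<epsilon> > 0\<close> by auto
  have "d_hw h w s s' < \<epsilon>" if s': "s' \<in> {0..\<zeta>}" "\<bar>s' - s\<bar> < \<delta>" for s'
  proof -
    note m_le = m_h_le_h[OF sn s s'(1)]
    have near: "tip h w s - \<epsilon>/3 \<le> w s r \<and> tip h w s - \<epsilon>/3 \<le> w s' r"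
      if "r \<in> {m_h h s s'..max (h s) (h s')}" for r
      using \<delta>[OF s' that] by linarith
    have "tip h w s - \<epsilon>/3 \<le> Inf (w s ` {m_h h s s'..h s})"
      using m_le near by (intro le_Inf_image_Icc) auto
    moreover have "tip h w s - \<epsilon>/3 \<le> Inf (w s' ` {m_h h s s'..h s'})"
      using m_le near by (intro le_Inf_image_Icc) auto
    moreover have "\<bar>w s' (h s') - tip h w s\<bar> < \<epsilon>/3"
      using m_le \<delta>[OF s', of "h s'"] by auto
    then have "tip h w s' < tip h w s + \<epsilon>/3"
      unfolding tip_def by linarith
    ultimately show ?thesis unfolding d_hw_def M_hw_def by linarith
  qed
  then show ?thesis using \<open>\<delta> > 0\<close> by (auto simp: dist_real_def)
qed

lemma d_hw_same: "d_hw h w s s = 0"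
  unfolding d_hw_def M_hw_same by simp

lemma d_hw_commute: "d_hw h w s t = d_hw h w t s"
  unfolding d_hw_def by (simp add: M_hw_commute)

lemma d_hw_nonneg:
  assumes "is_snake \<zeta> h w" "s \<in> {0..\<zeta>}" "t \<in> {0..\<zeta>}"
  shows "0 \<le> d_hw h w s t"
  using M_hw_le_tip[OF assms] M_hw_le_tip[OF assms(1,3,2)] unfolding d_hw_def M_hw_commute[of h w t]
  by linarith

lemma d_hw_triangle:
  assumes sn: "is_snake \<zeta> h w" and "s \<in> {0..\<zeta>}" "t \<in> {0..\<zeta>}" "u \<in> {0..\<zeta>}"
  shows "d_hw h w s u \<le> d_hw h w s t + d_hw h w t u"
  using M_hw_ultrametric[OF assms] M_hw_le_tip[OF sn \<open>t \<in> _\<close> \<open>s \<in> _\<close>]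
    M_hw_le_tip[OF sn \<open>t \<in> _\<close> \<open>u \<in> _\<close>]
  unfolding d_hw_def M_hw_commute[of h w t s] by linarith

lemma d_hw_four_point:
  assumes sn: "is_snake \<zeta> h w"
    and S: "s1 \<in> {0..\<zeta>}" "s2 \<in> {0..\<zeta>}" "s3 \<in> {0..\<zeta>}" "s4 \<in> {0..\<zeta>}"
  shows "d_hw h w s1 s2 + d_hw h w s3 s4
    \<le> max (d_hw h w s1 s3 + d_hw h w s2 s4) (d_hw h w s1 s4 + d_hw h w s2 s3)"
proof -
  have "min (M_hw h w s1 s3 + M_hw h w s2 s4) (M_hw h w s1 s4 + M_hw h w s2 s3)
      \<le> M_hw h w s1 s2 + M_hw h w s3 s4"
    by (rule four_point_of_ultrametric[where S = "{0..\<zeta>}"])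
      (use M_hw_commute M_hw_ultrametric[OF sn] S in auto)
  then show ?thesis unfolding d_hw_def by linarith
qed

lemma d_hw_continuous:
  assumes "is_snake \<zeta> h w"
  shows "continuous_on ({0..\<zeta>} \<times> {0..\<zeta>}) (\<lambda>(s, t). d_hw h w s t)"
  using d_hw_commute d_hw_triangle[OF assms] d_hw_local[OF assms]
  by (intro continuous_on_pseudometric) blast+

theorem lemma4p22:
  fixes \<zeta> :: real and h :: "real \<Rightarrow> real" and w :: "real \<Rightarrow> real \<Rightarrow> real"
  assumes "\<zeta> > 0" and "is_snake \<zeta> h w"
  shows "(\<forall>s\<in>{0..\<zeta>}. d_hw h w s s = 0)
    \<and> (\<forall>s\<in>{0..\<zeta>}. \<forall>t\<in>{0..\<zeta>}. d_hw h w s t \<ge> 0)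
    \<and> (\<forall>s\<in>{0..\<zeta>}. \<forall>t\<in>{0..\<zeta>}. d_hw h w s t = d_hw h w t s)
    \<and> (\<forall>s\<in>{0..\<zeta>}. \<forall>t\<in>{0..\<zeta>}. \<forall>u\<in>{0..\<zeta>}. d_hw h w s u \<le> d_hw h w s t + d_hw h w t u)
    \<and> continuous_on ({0..\<zeta>} \<times> {0..\<zeta>}) (\<lambda>(s, t). d_hw h w s t)
    \<and> (\<forall>s1\<in>{0..\<zeta>}. \<forall>s2\<in>{0..\<zeta>}. \<forall>s3\<in>{0..\<zeta>}. \<forall>s4\<in>{0..\<zeta>}.
         d_hw h w s1 s2 + d_hw h w s3 s4
           \<le> max (d_hw h w s1 s3 + d_hw h w s2 s4) (d_hw h w s1 s4 + d_hw h w s2 s3))"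
  using assms(2)
  by (simp add: d_hw_same d_hw_commute d_hw_nonneg d_hw_triangle d_hw_continuous d_hw_four_point)

end
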